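(* Let $d\ge1$ and $\beta>0$. There is $\kappa\in(0,1)$ depending only on $d,\beta$ such that, for all sufficiently small $\varepsilon\in(0,1)$ (depending only on $d,\beta$), with $K$ and $\xi_i$ as in the context, $$\mathbb{P}\Big[\sum_{i=1}^K\xi_i\le(1-\kappa)K/2\Big]\le\exp\{-(1-\kappa)^2K/2\}.$$
   Context: The $\beta$-LRP metric $D$ on $\mathbb{R}^d$ comes with a random set $\mathcal{E}$ of long edges $\langle\bm u,\bm v\rangle$, $\bm u,\bm v\in\mathbb{R}^d$, forming a Poisson point process with intensity $\beta|\bm u-\bm v|^{-2d}$: for disjoint Borel sets $U,W$, the probability of at least one long edge between $U$ and $W$ is $1-\exp\{-\int_U\int_W\beta|\bm u-\bm v|^{-2d}d\bm u\,d\bm v\}$, with independence over disjoint regions. $\theta\in(0,1)$ is the distance exponent of critical LRP. $B_r(\bm 0)$ is the Euclidean ball, $\mathbb{A}_{r,s}=B_r(\bm0)\setminus B_s(\bm 0)$, and $D(U,W;V)$ the $D$-distance between $U,W$ restricted to $V$. Fix $c_{*,1},c_{*,2}>0$ depending only on $d,\beta$ with $\mathbb{P}[D(B_{1/2}(\bm0),\mathbb{A}_{1,7/8};B_1(\bm 0))\ge c_{*,1}]\ge c_{*,2}$. For $\varepsilon\in(0,1)$ set $K=\sqrt{\log(1/\varepsilon)}$, $N=(4^{-(1+1/\theta)}(c_{*,1}/\varepsilon)^{1/\theta})^{1/K}$, $M_1=(4\varepsilon/c_{*,1})^{1/\theta}$, $M_i=NM_{i-1}$ ($2\le i\le K$),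 $r_i=\sum_{k=1}^iM_k$. For $i\in[1,K]_{\mathbb{Z}}$, $E_{i,1}$ is the event that some long edge connects $B_{r_i-M_i/8}(\bm0)$ and $B_{r_i}(\bm 0)^c$, and $\xi_i=1$ if $E_{i,1}^c$ occurs, $\xi_i=0$ otherwise. *)

theory Defs
  imports "HOL-Probability.Probability"
begin

text \<open>A (random) set of long edges is a set of pairs of points; the edge \<open>(u,v)\<close>
  is understood as the unordered edge between u and v.\<close>

definition connects :: "('a \<times> 'a) set \<Rightarrow> 'a set \<Rightarrow> 'a set \<Rightarrow> bool" where
  "connects Ed U W \<longleftrightarrow> (\<exists>(u, v) \<in> Ed. (u \<in> U \<and> v \<in> W) \<or> (u \<in> W \<and> v \<in> U))"

definition edge_region :: "'a set \<Rightarrow> 'a set \<Rightarrow> ('a \<times> 'a) set" where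
  "edge_region U W = {(u, v). (u \<in> U \<and> v \<in> W) \<or> (u \<in> W \<and> v \<in> U)}"

definition lrp_mass :: "real \<Rightarrow> (real ^ 'n) set \<Rightarrow> (real ^ 'n) set \<Rightarrow> ennreal" where
  "lrp_mass \<beta> U W =
     (\<integral>\<^sup>+ u. indicator U u * (\<integral>\<^sup>+ v. indicator W v *
         ennreal (\<beta> / norm (u - v) ^ (2 * CARD('n))) \<partial>lborel) \<partial>lborel)"

text \<open>\<open>lrp_edges \<beta> M E\<close>: on the probability space M, E is the random set of long edges of
  the beta-LRP: for disjoint Borel sets U, W the probability of an edge between U and W is
  \<open>1 - exp(-lrp_mass \<beta> U W)\<close>, with independence over disjoint regions.\<close>
definition lrp_edges ::
  "real \<Rightarrow> 'a measure \<Rightarrow> ('a \<Rightarrow> ((real ^ 'n) \<times> (real ^ 'n)) set) \<Rightarrow> bool" where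
  "lrp_edges \<beta> M E \<longleftrightarrow> prob_space M \<and>
     (\<forall>(J :: nat set) U W.
        finite J \<longrightarrow>
        (\<forall>j\<in>J. U j \<in> sets lborel \<and> W j \<in> sets lborel \<and> U j \<inter> W j = {}) \<longrightarrow>
        disjoint_family_on (\<lambda>j. edge_region (U j) (W j)) J \<longrightarrow>
          (\<forall>j\<in>J. {\<omega> \<in> space M. connects (E \<omega>) (U j) (W j)} \<in> sets M \<and>
             measure M {\<omega> \<in> space M. connects (E \<omega>) (U j) (W j)} =
               (if lrp_mass \<beta> (U j) (W j) = \<infinity> then 1
                else 1 - exp (- enn2real (lrp_mass \<beta> (U j) (W j))))) \<and>
          prob_space.indep_events M
            (\<lambda>j. {\<omega> \<in> space M. connects (E \<omega>) (U j) (W j)}) J)"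

definition scaleK :: "real \<Rightarrow> real" where
  "scaleK \<epsilon> = sqrt (ln (1 / \<epsilon>))"

definition scaleN :: "real \<Rightarrow> real \<Rightarrow> real \<Rightarrow> real" where
  "scaleN \<theta> c1 \<epsilon> =
     (4 powr (- (1 + 1 / \<theta>)) * (c1 / \<epsilon>) powr (1 / \<theta>)) powr (1 / scaleK \<epsilon>)"

definition scaleM :: "real \<Rightarrow> real \<Rightarrow> real \<Rightarrow> nat \<Rightarrow> real" where
  "scaleM \<theta> c1 \<epsilon> i = scaleN \<theta> c1 \<epsilon> ^ (i - 1) * (4 * \<epsilon> / c1) powr (1 / \<theta>)"

definition scaler :: "real \<Rightarrow> real \<Rightarrow> real \<Rightarrow> nat \<Rightarrow> real" where
  "scaler \<theta> c1 \<epsilon> i = (\<Sum>k = 1..i. scaleM \<theta> c1 \<epsilon> k)"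

definition xi :: "real \<Rightarrow> real \<Rightarrow> real \<Rightarrow> ((real ^ 'n) \<times> (real ^ 'n)) set \<Rightarrow> nat \<Rightarrow> real" where
  "xi \<theta> c1 \<epsilon> Ed i =
     (if connects Ed (ball 0 (scaler \<theta> c1 \<epsilon> i - scaleM \<theta> c1 \<epsilon> i / 8))
                     (- ball 0 (scaler \<theta> c1 \<epsilon> i))
      then 0 else 1)"

end

theory Submission
  imports Defs
begin

(*
  Split the ball B(r_i - M_i/8) into the annulus A_i = B(r_i - M_i/8) - B(r_(i-1)) and the
  inner ball B(r_(i-1)).  The expected number of long edges between a set U inside B(a) and a
  set at distance rho from U is at most beta c_d (a/rho)^d.  For A_i and the complement of
  B(r_i) the ratio a/rho is at most 16, so the events "no edge from A_i to B(r_i)^c" have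
  probability at least p = exp(-beta c_d 16^d); their edge regions are pairwise disjoint, so
  they are independent, and by Hoeffding fewer than p K/4 of the K of them occur with
  probability at most exp(-p^2 K/2).  On the other hand r_(i-1) <= M_i/(N-1), so an edge from
  B(r_(i-1)) to B(r_i)^c has probability O(1/N) = O(exp(-K)), and off these K rare events
  xi_i is exactly the indicator of the annulus event.  With kappa = 1 - p/2 the two error
  terms add up to at most exp(-(1 - kappa)^2 K/2).
*)

lemma nn_integral_inverse_1_plus_square:
  "(\<integral>\<^sup>+x. ennreal (inverse (1 + x\<^sup>2)) \<partial>lborel) = ennreal pi"
proof -
  have "integrable lborel (\<lambda>x::real. inverse (1 + x\<^sup>2))"
    using integrable_inverse_1_plus_square by (simp add: set_integrable_def)
  then have "(\<integral>\<^sup>+x. ennreal (inverse (1 + x\<^sup>2)) \<partial>lborel)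
      = ennreal (\<integral>x. inverse (1 + x\<^sup>2) \<partial>lborel)"
    by (intro nn_integral_eq_integral) auto
  also have "(\<integral>x. inverse (1 + x\<^sup>2) \<partial>lborel) = pi"
    using LBINT_inverse_1_plus_square
    by (simp add: interval_lebesgue_integral_def set_lebesgue_integral_def)
  finally show ?thesis .
qed

lemma nn_integral_inverse_square_plus_square:
  fixes \<rho> :: real
  assumes "\<rho> > 0"
  shows "(\<integral>\<^sup>+x. ennreal (1 / (\<rho>\<^sup>2 + x\<^sup>2)) \<partial>lborel) = ennreal (pi / \<rho>)"
proof -
  have scale: "1 / (\<rho>\<^sup>2 + (\<rho> * x)\<^sup>2) = 1 / \<rho>\<^sup>2 * inverse (1 + x\<^sup>2)" for x
    using assms by (simp add: field_simps)
  have "(\<integral>\<^sup>+x. ennreal (1 / (\<rho>\<^sup>2 + x\<^sup>2)) \<partial>lborel)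
      = ennreal \<bar>\<rho>\<bar> * (\<integral>\<^sup>+x. ennreal (1 / (\<rho>\<^sup>2 + (0 + \<rho> * x)\<^sup>2)) \<partial>lborel)"
    by (rule nn_integral_real_affine) (use assms in auto)
  also have "(\<integral>\<^sup>+x. ennreal (1 / (\<rho>\<^sup>2 + (0 + \<rho> * x)\<^sup>2)) \<partial>lborel)
      = (\<integral>\<^sup>+x. ennreal (1 / \<rho>\<^sup>2) * ennreal (inverse (1 + x\<^sup>2)) \<partial>lborel)"
    by (intro nn_integral_cong, simp only: add_0 scale, rule ennreal_mult) auto
  also have "\<dots> = ennreal (1 / \<rho>\<^sup>2) * ennreal pi"
    by (simp add: nn_integral_cmult nn_integral_inverse_1_plus_square)
  also have "ennreal \<bar>\<rho>\<bar> * \<dots> = ennreal (pi / \<rho>)"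
    using assms by (simp add: ennreal_mult'[symmetric] power2_eq_square)
  finally show ?thesis .
qed

lemma nn_integral_prod_inverse_square_plus_square:
  fixes \<rho> :: real
  assumes "\<rho> > 0"
  shows "(\<integral>\<^sup>+w. (\<Prod>b\<in>Basis. ennreal (1 / (\<rho>\<^sup>2 + (w \<bullet> b)\<^sup>2)))
      \<partial>(lborel :: 'a::euclidean_space measure))
    = ennreal ((pi / \<rho>) ^ DIM('a))"
proof -
  have "(\<integral>\<^sup>+w. (\<Prod>b\<in>Basis. ennreal (1 / (\<rho>\<^sup>2 + (w \<bullet> b)\<^sup>2))) \<partial>(lborel :: 'a measure))
      = (\<Prod>b\<in>(Basis :: 'a set). \<integral>\<^sup>+x. ennreal (1 / (\<rho>\<^sup>2 + x\<^sup>2)) \<partial>lborel)"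
    by (rule nn_integral_lborel_prod) auto
  then show ?thesis
    using assms by (simp add: nn_integral_inverse_square_plus_square ennreal_power)
qed

(* Dominating the kernel by a product of one-dimensional Cauchy kernels makes its integral
   over the complement of a ball factorise. *)
lemma inverse_norm_power_le_prod:
  fixes w :: "'a::euclidean_space"
  assumes "0 < \<rho>" "\<rho> \<le> norm w"
  shows "1 / norm w ^ (2 * DIM('a)) \<le> 2 ^ DIM('a) * (\<Prod>b\<in>Basis. 1 / (\<rho>\<^sup>2 + (w \<bullet> b)\<^sup>2))"
proof -
  have "0 < norm w"
    using assms by linarith
  have "(\<Prod>b\<in>(Basis :: 'a set). \<rho>\<^sup>2 + (w \<bullet> b)\<^sup>2) \<le> (\<Prod>b\<in>(Basis :: 'a set). 2 * norm w ^ 2)"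
  proof (rule prod_mono)
    fix b :: 'a
    assume "b \<in> Basis"
    then have "(w \<bullet> b)\<^sup>2 \<le> (norm w)\<^sup>2"
      by (metis Basis_le_norm abs_ge_zero power2_abs power_mono)
    moreover have "\<rho>\<^sup>2 \<le> (norm w)\<^sup>2"
      using assms by (intro power_mono) auto
    ultimately show "0 \<le> \<rho>\<^sup>2 + (w \<bullet> b)\<^sup>2 \<and> \<rho>\<^sup>2 + (w \<bullet> b)\<^sup>2 \<le> 2 * norm w ^ 2"
      by auto
  qed
  also have "\<dots> = 2 ^ DIM('a) * norm w ^ (2 * DIM('a))"
    by (simp add: power_mult power_mult_distrib)
  finally have "(\<Prod>b\<in>(Basis :: 'a set). \<rho>\<^sup>2 + (w \<bullet> b)\<^sup>2) \<le> 2 ^ DIM('a) * norm w ^ (2 * DIM('a))" .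
  moreover have "0 < (\<Prod>b\<in>(Basis :: 'a set). \<rho>\<^sup>2 + (w \<bullet> b)\<^sup>2)"
    using assms by (intro prod_pos) (auto intro: add_pos_nonneg)
  ultimately show ?thesis
    using \<open>0 < norm w\<close> by (simp add: prod_dividef field_simps)
qed

lemma nn_integral_inverse_norm_power_le:
  fixes u :: "'a::euclidean_space"
  assumes "0 \<le> \<beta>" "0 < \<rho>" "\<And>v. v \<in> W \<Longrightarrow> \<rho> \<le> norm (u - v)"
  shows "(\<integral>\<^sup>+v. indicator W v * ennreal (\<beta> / norm (u - v) ^ (2 * DIM('a))) \<partial>lborel)
    \<le> ennreal (\<beta> * (2 * pi / \<rho>) ^ DIM('a))"
proof -
  define F where "F w = (\<Prod>b\<in>Basis. ennreal (1 / (\<rho>\<^sup>2 + (w \<bullet> b)\<^sup>2)))" for w :: 'a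
  have F_measurable[measurable]: "F \<in> borel_measurable borel"
    unfolding F_def by measurable
  have "(\<integral>\<^sup>+v. indicator W v * ennreal (\<beta> / norm (u - v) ^ (2 * DIM('a))) \<partial>lborel)
      \<le> (\<integral>\<^sup>+v. ennreal (\<beta> * 2 ^ DIM('a)) * F (v - u) \<partial>lborel)"
  proof (intro nn_integral_mono)
    fix v
    show "indicator W v * ennreal (\<beta> / norm (u - v) ^ (2 * DIM('a)))
      \<le> ennreal (\<beta> * 2 ^ DIM('a)) * F (v - u)"
    proof (cases "v \<in> W")
      case True
      then have "\<rho> \<le> norm (v - u)"
        using assms(3) by (metis norm_minus_commute)
      then have "\<beta> * (1 / norm (v - u) ^ (2 * DIM('a)))
          \<le> \<beta> * (2 ^ DIM('a) * (\<Prod>b\<in>Basis. 1 / (\<rho>\<^sup>2 + ((v - u) \<bullet> b)\<^sup>2)))"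
        using assms by (intro mult_left_mono inverse_norm_power_le_prod) auto
      then show ?thesis
        using True assms
        by (simp add: F_def norm_minus_commute prod_ennreal ennreal_mult[symmetric] ennreal_leI
            prod_nonneg)
    qed simp
  qed
  also have "\<dots> = ennreal (\<beta> * 2 ^ DIM('a)) * (\<integral>\<^sup>+v. F (v - u) \<partial>lborel)"
    by (rule nn_integral_cmult) measurable
  also have "(\<integral>\<^sup>+v. F (v - u) \<partial>lborel) = (\<integral>\<^sup>+w. F w \<partial>lborel)"
    using nn_integral_distr[of "(+) (- u)" lborel borel F] lborel_distr_plus[of "- u"] by simp
  also have "\<dots> = ennreal ((pi / \<rho>) ^ DIM('a))"
    unfolding F_def using assms(2) by (rule nn_integral_prod_inverse_square_plus_square)
  also have "ennreal (\<beta> * 2 ^ DIM('a)) * \<dots> = ennreal (\<beta> * (2 * pi / \<rho>) ^ DIM('a))"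
    using assms by (simp add: ennreal_mult[symmetric] power_mult_distrib[symmetric])
  finally show ?thesis .
qed

definition lrp_mass_const :: "nat \<Rightarrow> real" where
  "lrp_mass_const d = (2 * pi) ^ d * unit_ball_vol d"

lemma lrp_mass_const_pos: "0 < lrp_mass_const d"
  by (simp add: lrp_mass_const_def)

lemma lrp_mass_le:
  fixes U W :: "(real ^ 'n) set"
  assumes "0 \<le> \<beta>" "0 < \<rho>" "0 \<le> a" "U \<subseteq> ball 0 a"
    and "\<And>u v. u \<in> U \<Longrightarrow> v \<in> W \<Longrightarrow> \<rho> \<le> norm (u - v)"
  shows "lrp_mass \<beta> U W \<le> ennreal (\<beta> * lrp_mass_const CARD('n) * (a / \<rho>) ^ CARD('n))"
proof -
  define C where "C = \<beta> * (2 * pi / \<rho>) ^ CARD('n)"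
  have "lrp_mass \<beta> U W \<le> (\<integral>\<^sup>+u. ennreal C * indicator (ball (0 :: real ^ 'n) a) u \<partial>lborel)"
    unfolding lrp_mass_def
  proof (intro nn_integral_mono)
    fix u :: "real ^ 'n"
    show "indicator U u
        * (\<integral>\<^sup>+v. indicator W v * ennreal (\<beta> / norm (u - v) ^ (2 * CARD('n))) \<partial>lborel)
        \<le> ennreal C * indicator (ball 0 a) u"
    proof (cases "u \<in> U")
      case True
      then have "(\<integral>\<^sup>+v. indicator W v * ennreal (\<beta> / norm (u - v) ^ (2 * CARD('n))) \<partial>lborel)
          \<le> ennreal C"
        using nn_integral_inverse_norm_power_le[of \<beta> \<rho> W u] assms by (simp add: C_def)
      then show ?thesis
        using True assms(4) by auto
    qed simp
  qed
  also have "\<dots> = ennreal C * emeasure lborel (ball (0 :: real ^ 'n) a)"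
    by (rule nn_integral_cmult_indicator) simp
  also have "\<dots> = ennreal (\<beta> * lrp_mass_const CARD('n) * (a / \<rho>) ^ CARD('n))"
    using assms
    by (simp add: emeasure_ball C_def lrp_mass_const_def ennreal_mult[symmetric] field_simps)
  finally show ?thesis .
qed

lemma lrp_mass_ball_compl_le:
  fixes U :: "(real ^ 'n) set"
  assumes "0 \<le> \<beta>" "0 \<le> a" "a < r" "U \<subseteq> ball 0 a"
  shows "lrp_mass \<beta> U (- ball 0 r)
    \<le> ennreal (\<beta> * lrp_mass_const CARD('n) * (a / (r - a)) ^ CARD('n))"
proof (rule lrp_mass_le)
  fix u v :: "real ^ 'n"
  assume "u \<in> U" "v \<in> - ball 0 r"
  then have "norm u < a" "r \<le> norm v"
    using assms(4) by auto
  then show "r - a \<le> norm (u - v)"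
    using norm_triangle_ineq2[of v u] norm_minus_commute[of u v] by linarith
qed (use assms in auto)

lemma scaler_0 [simp]: "scaler \<theta> c1 \<epsilon> 0 = 0"
  by (simp add: scaler_def)

lemma scaler_Suc: "scaler \<theta> c1 \<epsilon> (Suc i) = scaler \<theta> c1 \<epsilon> i + scaleM \<theta> c1 \<epsilon> (Suc i)"
  by (simp add: scaler_def)

lemma scaleM_nonneg: "0 \<le> scaleN \<theta> c1 \<epsilon> \<Longrightarrow> 0 \<le> scaleM \<theta> c1 \<epsilon> i"
  by (simp add: scaleM_def)

lemma scaler_mono:
  assumes "0 \<le> scaleN \<theta> c1 \<epsilon>" "i \<le> j"
  shows "scaler \<theta> c1 \<epsilon> i \<le> scaler \<theta> c1 \<epsilon> j"
  unfolding scaler_def using assms by (intro sum_mono2) (auto intro: scaleM_nonneg)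

lemma scaler_geometric:
  "scaler \<theta> c1 \<epsilon> i * (scaleN \<theta> c1 \<epsilon> - 1) = (4 * \<epsilon> / c1) powr (1 / \<theta>) * (scaleN \<theta> c1 \<epsilon> ^ i - 1)"
  by (induction i) (simp_all add: scaler_Suc scaleM_def algebra_simps)

lemma scaler_pred_le:
  assumes "1 < scaleN \<theta> c1 \<epsilon>" "1 \<le> i"
  shows "scaler \<theta> c1 \<epsilon> (i - 1) \<le> scaleM \<theta> c1 \<epsilon> i / (scaleN \<theta> c1 \<epsilon> - 1)"
proof -
  have "scaler \<theta> c1 \<epsilon> (i - 1) * (scaleN \<theta> c1 \<epsilon> - 1) \<le> scaleM \<theta> c1 \<epsilon> i"
    unfolding scaler_geometric by (simp add: scaleM_def algebra_simps)
  then show ?thesis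
    using assms by (simp add: pos_le_divide_eq)
qed

lemma scaler_le_twice_scaleM:
  assumes "2 \<le> scaleN \<theta> c1 \<epsilon>" "1 \<le> i"
  shows "scaler \<theta> c1 \<epsilon> i \<le> 2 * scaleM \<theta> c1 \<epsilon> i"
proof -
  have "scaleM \<theta> c1 \<epsilon> i / (scaleN \<theta> c1 \<epsilon> - 1) \<le> scaleM \<theta> c1 \<epsilon> i"
    using assms scaleM_nonneg[of \<theta> c1 \<epsilon> i]
      mult_left_mono[of 1 "scaleN \<theta> c1 \<epsilon> - 1" "scaleM \<theta> c1 \<epsilon> i"]
    by (simp add: divide_le_eq)
  moreover have "scaler \<theta> c1 \<epsilon> i = scaler \<theta> c1 \<epsilon> (i - 1) + scaleM \<theta> c1 \<epsilon> i"
    using assms scaler_Suc[of \<theta> c1 \<epsilon> "i - 1"] by simp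
  ultimately show ?thesis
    using scaler_pred_le[of \<theta> c1 \<epsilon> i] assms by simp
qed

lemma scaleK_gt:
  assumes "0 < \<epsilon>" "\<epsilon> < exp (- K\<^sup>2)" "0 \<le> K"
  shows "K < scaleK \<epsilon>"
proof -
  have "K\<^sup>2 < ln (1 / \<epsilon>)"
    using assms ln_less_cancel_iff[of \<epsilon> "exp (- K\<^sup>2)"] by (simp add: ln_div)
  then have "sqrt (K\<^sup>2) < scaleK \<epsilon>"
    unfolding scaleK_def by (rule real_sqrt_less_mono)
  then show ?thesis
    using assms(3) by simp
qed

lemma scaleN_ge_exp:
  assumes "0 < \<theta>" "\<theta> < 1" "0 < c1" "0 < \<epsilon>" "1 \<le> scaleK \<epsilon>"
  shows "exp (scaleK \<epsilon> - \<bar>(1 + 1 / \<theta>) * ln 4 - ln c1 / \<theta>\<bar>) \<le> scaleN \<theta> c1 \<epsilon>"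
proof -
  define K where "K = scaleK \<epsilon>"
  define B where "B = (1 + 1 / \<theta>) * ln 4 - ln c1 / \<theta>"
  define base where "base = 4 powr (- (1 + 1 / \<theta>)) * (c1 / \<epsilon>) powr (1 / \<theta>)"
  have "1 \<le> ln (1 / \<epsilon>)"
    using assms(5) unfolding scaleK_def by simp
  then have K_sq: "K\<^sup>2 = - ln \<epsilon>"
    by (simp add: K_def scaleK_def ln_div)
  have "ln base = K\<^sup>2 / \<theta> - B"
    using assms K_sq by (simp add: base_def B_def ln_mult ln_div field_simps)
  moreover have "scaleN \<theta> c1 \<epsilon> = exp (ln base / K)"
    using assms by (simp add: scaleN_def base_def K_def powr_def)
  moreover have "K - \<bar>B\<bar> \<le> K / \<theta> - B / K"
  proof -
    have "K \<le> K / \<theta>"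
      using assms by (simp add: K_def le_divide_eq)
    moreover have "B / K \<le> \<bar>B\<bar>"
      using assms mult_left_mono[of 1 K "\<bar>B\<bar>"] by (simp add: K_def divide_le_eq)
    ultimately show ?thesis
      by linarith
  qed
  ultimately show ?thesis
    using assms by (simp add: K_def B_def power2_eq_square diff_divide_distrib)
qed

lemma connects_Un_left: "connects Ed (A \<union> B) W \<longleftrightarrow> connects Ed A W \<or> connects Ed B W"
  unfolding connects_def by blast

lemma edge_region_disjointI:
  "U \<inter> (U' \<union> W') = {} \<Longrightarrow> edge_region U W \<inter> edge_region U' W' = {}"
  unfolding edge_region_def by blast

lemma lrp_edges_prob_space: "lrp_edges \<beta> M E \<Longrightarrow> prob_space M"
  by (simp add: lrp_edges_def)

lemma lrp_edges_indep_connects: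
  fixes J :: "nat set"
  assumes "lrp_edges \<beta> M E" "finite J"
    and "\<And>j. j \<in> J \<Longrightarrow> U j \<in> sets lborel \<and> W j \<in> sets lborel \<and> U j \<inter> W j = {}"
    and "disjoint_family_on (\<lambda>j. edge_region (U j) (W j)) J"
  shows "prob_space.indep_events M (\<lambda>j. {\<omega> \<in> space M. connects (E \<omega>) (U j) (W j)}) J"
  using assms(1) unfolding lrp_edges_def
  by (elim conjE allE[of _ J] allE[of _ U] allE[of _ W]) (use assms(2-4) in auto)

lemma lrp_edges_connects:
  assumes "lrp_edges \<beta> M E" "U \<in> sets lborel" "W \<in> sets lborel" "U \<inter> W = {}"
    and "lrp_mass \<beta> U W \<le> ennreal x" "0 \<le> x"
  defines "C \<equiv> {\<omega> \<in> space M. connects (E \<omega>) U W}"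
  shows "C \<in> sets M" and "measure M C \<le> x" and "exp (- x) \<le> measure M (space M - C)"
proof -
  interpret prob_space M
    using assms(1) by (rule lrp_edges_prob_space)
  define m where "m = enn2real (lrp_mass \<beta> U W)"
  have "lrp_mass \<beta> U W \<noteq> \<infinity>"
    using assms(5) by (auto simp: top_unique)
  moreover have "C \<in> events \<and> prob C =
      (if lrp_mass \<beta> U W = \<infinity> then 1 else 1 - exp (- enn2real (lrp_mass \<beta> U W)))"
    using assms(1-4) unfolding lrp_edges_def C_def
    by (elim conjE allE[of _ "{0 :: nat}"] allE[of _ "\<lambda>_. U"] allE[of _ "\<lambda>_. W"])
      (auto simp: disjoint_family_on_def)
  ultimately have C: "C \<in> events" and prob_C: "prob C = 1 - exp (- m)"
    by (auto simp: m_def)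
  have "m \<le> x"
    using assms(5,6) enn2real_mono[of "lrp_mass \<beta> U W" "ennreal x"] by (simp add: m_def)
  from C show "C \<in> sets M"
    by simp
  show "measure M C \<le> x"
    using prob_C exp_ge_add_one_self[of "- m"] \<open>m \<le> x\<close> by linarith
  show "exp (- x) \<le> measure M (space M - C)"
    using prob_compl[OF C] prob_C \<open>m \<le> x\<close> by simp
qed

lemma (in prob_space) indep_events_sigma_sets:
  assumes "indep_events A I"
  shows "indep_sets (\<lambda>i. sigma_sets (space M) {A i}) I"
  using assms unfolding indep_events_def_alt by (rule indep_sets_sigma) (simp add: Int_stable_def)

lemma (in prob_space) indep_events_compl:
  assumes "indep_events A I"
  shows "indep_events (\<lambda>i. space M - A i) I"
  using indep_events_sigma_sets[OF assms] unfolding indep_events_def_alt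
  by (rule indep_sets_mono_sets) (auto intro: sigma_sets.Compl)

lemma (in prob_space) indep_vars_indicator:
  assumes "indep_events A I"
  shows "indep_vars (\<lambda>_. borel) (\<lambda>i. indicator (A i) :: 'a \<Rightarrow> real) I"
proof -
  have A: "A i \<in> events" if "i \<in> I" for i
    using assms that by (auto simp: indep_events_def)
  from indep_events_sigma_sets[OF assms]
  have "indep_sets (\<lambda>i. {indicator (A i) -` B \<inter> space M | B. B \<in> sets (borel :: real measure)}) I"
  proof (rule indep_sets_mono_sets)
    fix i
    assume "i \<in> I"
    let ?G = "sigma (space M) {A i}"
    have "{A i} \<subseteq> Pow (space M)"
      using A[OF \<open>i \<in> I\<close>] sets.sets_into_space by auto
    then have sets_G: "sets ?G = sigma_sets (space M) {A i}" and space_G: "space ?G = space M"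
      by simp_all
    have indicator_G: "(indicator (A i) :: 'a \<Rightarrow> real) \<in> borel_measurable ?G"
      by (rule borel_measurable_indicator) (simp add: sets_G)
    show "{indicator (A i) -` B \<inter> space M | B. B \<in> sets (borel :: real measure)}
        \<subseteq> sigma_sets (space M) {A i}"
      using measurable_sets[OF indicator_G] unfolding sets_G space_G by blast
  qed
  then show ?thesis
    unfolding indep_vars_def2 using A by auto
qed

lemma (in prob_space) indep_events_count_le:
  fixes p t :: real
  assumes "indep_events A I" "finite I" "I \<noteq> {}"
    and "\<And>i. i \<in> I \<Longrightarrow> p \<le> prob (A i)" "t \<le> card I * p"
  shows "prob {\<omega> \<in> space M. (\<Sum>i\<in>I. indicator (A i) \<omega>) \<le> t}
    \<le> exp (- 2 * (card I * p - t)\<^sup>2 / card I)"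
proof -
  let ?\<mu> = "\<Sum>i\<in>I. prob (A i)"
  interpret Hoeffding_ineq M I "\<lambda>i. indicator (A i)" "\<lambda>_. 0" "\<lambda>_. 1" ?\<mu>
  proof unfold_locales
    have "?\<mu> = (\<Sum>i\<in>I. expectation (indicator (A i)))"
      using assms(1) unfolding indep_events_def by (intro sum.cong) auto
    then show "?\<mu> \<equiv> \<Sum>i\<in>I. expectation (indicator (A i))"
      by simp
  qed (use assms indep_vars_indicator in \<open>auto simp: indicator_def\<close>)
  have "card I * p \<le> ?\<mu>"
    using sum_mono[of I "\<lambda>_. p" "\<lambda>i. prob (A i)"] assms(4) by simp
  then have "(card I * p - t)\<^sup>2 \<le> (?\<mu> - t)\<^sup>2"
    using assms(5) by (intro power_mono) auto
  have "prob {\<omega> \<in> space M. (\<Sum>i\<in>I. indicator (A i) \<omega>) \<le> t} \<le> exp (- 2 * (?\<mu> - t)\<^sup>2 / card I)"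
    using Hoeffding_ineq_le[of "?\<mu> - t"] assms \<open>card I * p \<le> ?\<mu>\<close> by (simp add: card_gt_0_iff)
  also have "\<dots> \<le> exp (- 2 * (card I * p - t)\<^sup>2 / card I)"
    using \<open>(card I * p - t)\<^sup>2 \<le> (?\<mu> - t)\<^sup>2\<close> by (simp add: divide_right_mono)
  finally show ?thesis .
qed

locale lrp_scales =
  fixes \<theta> c1 \<epsilon> :: real
  assumes eps_pos: "0 < \<epsilon>" and c1_pos: "0 < c1" and two_le_scaleN: "2 \<le> scaleN \<theta> c1 \<epsilon>"
begin

definition inner_radius :: "nat \<Rightarrow> real" where
  "inner_radius i = scaler \<theta> c1 \<epsilon> i - scaleM \<theta> c1 \<epsilon> i / 8"

definition annulus :: "nat \<Rightarrow> (real ^ 'n) set" where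
  "annulus i = ball 0 (inner_radius i) - ball 0 (scaler \<theta> c1 \<epsilon> (i - 1))"

lemma scaleM_pos: "0 < scaleM \<theta> c1 \<epsilon> i"
  using eps_pos c1_pos two_le_scaleN by (simp add: scaleM_def)

lemma scaler_nonneg: "0 \<le> scaler \<theta> c1 \<epsilon> i"
  using scaler_mono[of \<theta> c1 \<epsilon> 0 i] two_le_scaleN by simp

lemma scaler_pred_eq: "1 \<le> i \<Longrightarrow> scaler \<theta> c1 \<epsilon> i = scaler \<theta> c1 \<epsilon> (i - 1) + scaleM \<theta> c1 \<epsilon> i"
  using scaler_Suc[of \<theta> c1 \<epsilon> "i - 1"] by simp

lemma inner_radius_less: "inner_radius i < scaler \<theta> c1 \<epsilon> i"
  using scaleM_pos[of i] by (simp add: inner_radius_def)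

lemma scaler_pred_le_inner_radius: "1 \<le> i \<Longrightarrow> scaler \<theta> c1 \<epsilon> (i - 1) \<le> inner_radius i"
  using scaler_pred_eq[of i] scaleM_pos[of i] by (simp add: inner_radius_def)

lemma inner_radius_ratio_le:
  assumes "1 \<le> i"
  shows "inner_radius i / (scaler \<theta> c1 \<epsilon> i - inner_radius i) \<le> 16"
  using scaler_le_twice_scaleM[OF two_le_scaleN assms] scaleM_pos[of i]
  by (simp add: inner_radius_def divide_le_eq)

lemma scaler_pred_ratio_le:
  assumes "1 \<le> i"
  shows "scaler \<theta> c1 \<epsilon> (i - 1) / (scaler \<theta> c1 \<epsilon> i - scaler \<theta> c1 \<epsilon> (i - 1))
    \<le> 1 / (scaleN \<theta> c1 \<epsilon> - 1)"
  using scaler_pred_le[of \<theta> c1 \<epsilon> i] two_le_scaleN assms scaler_pred_eq[OF assms] scaleM_pos[of i]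
  by (simp add: divide_le_eq field_simps)

lemma annulus_subset_ball: "annulus i \<subseteq> ball 0 (scaler \<theta> c1 \<epsilon> i)"
  using inner_radius_less[of i] by (auto simp: annulus_def)

lemma xi_eq_annulus_edge:
  fixes Ed :: "((real ^ 'n) \<times> (real ^ 'n)) set"
  assumes "1 \<le> i" "\<not> connects Ed (ball 0 (scaler \<theta> c1 \<epsilon> (i - 1))) (- ball 0 (scaler \<theta> c1 \<epsilon> i))"
  shows "xi \<theta> c1 \<epsilon> Ed i = (if connects Ed (annulus i) (- ball 0 (scaler \<theta> c1 \<epsilon> i)) then 0 else 1)"
proof -
  have "ball 0 (inner_radius i) = annulus i \<union> ball (0 :: real ^ 'n) (scaler \<theta> c1 \<epsilon> (i - 1))"
    using scaler_pred_le_inner_radius[OF assms(1)] by (auto simp: annulus_def)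
  then show ?thesis
    using assms(2) unfolding xi_def inner_radius_def[symmetric] by (simp add: connects_Un_left)
qed

lemma annulus_edge_regions_disjoint:
  "disjoint_family_on
    (\<lambda>i. edge_region (annulus i :: (real ^ 'n) set) (- ball 0 (scaler \<theta> c1 \<epsilon> i))) {1..}"
proof -
  have "edge_region (annulus i :: (real ^ 'n) set) (- ball 0 (scaler \<theta> c1 \<epsilon> i))
      \<inter> edge_region (annulus j) (- ball 0 (scaler \<theta> c1 \<epsilon> j)) = {}" if "i < j" for i j
  proof (rule edge_region_disjointI)
    have "scaler \<theta> c1 \<epsilon> i \<le> scaler \<theta> c1 \<epsilon> (j - 1)" "scaler \<theta> c1 \<epsilon> i \<le> scaler \<theta> c1 \<epsilon> j"
      using that two_le_scaleN by (auto intro: scaler_mono)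
    then have "annulus j \<union> - ball 0 (scaler \<theta> c1 \<epsilon> j) \<subseteq> - ball (0 :: real ^ 'n) (scaler \<theta> c1 \<epsilon> i)"
      by (auto simp: annulus_def)
    with annulus_subset_ball[of i]
    show "(annulus i :: (real ^ 'n) set) \<inter> (annulus j \<union> - ball 0 (scaler \<theta> c1 \<epsilon> j)) = {}"
      by blast
  qed
  then show ?thesis
    unfolding disjoint_family_on_def by (metis Int_commute linorder_neqE_nat)
qed

lemma lrp_no_annulus_edge_prob:
  fixes E :: "'a \<Rightarrow> ((real ^ 'n) \<times> (real ^ 'n)) set"
  assumes "lrp_edges \<beta> M E" "0 \<le> \<beta>" "1 \<le> i"
  defines "F \<equiv> space M - {\<omega> \<in> space M. connects (E \<omega>) (annulus i) (- ball 0 (scaler \<theta> c1 \<epsilon> i))}"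
  shows "F \<in> sets M" and "exp (- (\<beta> * lrp_mass_const CARD('n) * 16 ^ CARD('n))) \<le> measure M F"
proof -
  have "lrp_mass \<beta> (annulus i :: (real ^ 'n) set) (- ball 0 (scaler \<theta> c1 \<epsilon> i))
      \<le> ennreal (\<beta> * lrp_mass_const CARD('n)
          * (inner_radius i / (scaler \<theta> c1 \<epsilon> i - inner_radius i)) ^ CARD('n))"
    by (rule lrp_mass_ball_compl_le)
      (use assms scaler_pred_le_inner_radius[of i] scaler_nonneg[of "i - 1"] inner_radius_less[of i]
        in \<open>auto simp: annulus_def\<close>)
  also have "\<dots> \<le> ennreal (\<beta> * lrp_mass_const CARD('n) * 16 ^ CARD('n))"
    using assms inner_radius_ratio_le[of i] scaler_pred_le_inner_radius[of i]
      scaler_nonneg[of "i - 1"] inner_radius_less[of i] lrp_mass_const_pos[of "CARD('n)"]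
    by (intro ennreal_leI mult_left_mono power_mono) simp_all
  finally have mass: "lrp_mass \<beta> (annulus i :: (real ^ 'n) set) (- ball 0 (scaler \<theta> c1 \<epsilon> i))
      \<le> ennreal (\<beta> * lrp_mass_const CARD('n) * 16 ^ CARD('n))" .
  have "(annulus i :: (real ^ 'n) set) \<inter> - ball 0 (scaler \<theta> c1 \<epsilon> i) = {}"
    using annulus_subset_ball[of i] by auto
  note connects = lrp_edges_connects[OF assms(1) _ _ this mass]
  then show "F \<in> sets M" "exp (- (\<beta> * lrp_mass_const CARD('n) * 16 ^ CARD('n))) \<le> measure M F"
    using assms(2) lrp_mass_const_pos[of "CARD('n)"] unfolding F_def
    by (auto simp: annulus_def intro: sets.Diff borel_open borel_closed)
qed

lemma lrp_inner_edge_prob: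
  fixes E :: "'a \<Rightarrow> ((real ^ 'n) \<times> (real ^ 'n)) set"
  assumes "lrp_edges \<beta> M E" "0 \<le> \<beta>" "1 \<le> i"
  defines "H \<equiv> {\<omega> \<in> space M.
    connects (E \<omega>) (ball 0 (scaler \<theta> c1 \<epsilon> (i - 1))) (- ball 0 (scaler \<theta> c1 \<epsilon> i))}"
  shows "H \<in> sets M" and "measure M H \<le> \<beta> * lrp_mass_const CARD('n) / (scaleN \<theta> c1 \<epsilon> - 1)"
proof -
  define q where "q = scaler \<theta> c1 \<epsilon> (i - 1) / (scaler \<theta> c1 \<epsilon> i - scaler \<theta> c1 \<epsilon> (i - 1))"
  have less: "scaler \<theta> c1 \<epsilon> (i - 1) < scaler \<theta> c1 \<epsilon> i"
    using scaler_pred_le_inner_radius[OF assms(3)] inner_radius_less[of i] by linarith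
  have "0 \<le> q" "q \<le> 1 / (scaleN \<theta> c1 \<epsilon> - 1)" "1 / (scaleN \<theta> c1 \<epsilon> - 1) \<le> 1"
    using scaler_nonneg[of "i - 1"] less scaler_pred_ratio_le[OF assms(3)] two_le_scaleN
    by (auto simp: q_def)
  then have "q ^ CARD('n) \<le> 1 / (scaleN \<theta> c1 \<epsilon> - 1)"
    using power_decreasing[of 1 "CARD('n)" q] by simp
  have "lrp_mass \<beta> (ball 0 (scaler \<theta> c1 \<epsilon> (i - 1))) (- ball (0 :: real ^ 'n) (scaler \<theta> c1 \<epsilon> i))
      \<le> ennreal (\<beta> * lrp_mass_const CARD('n) * q ^ CARD('n))"
    unfolding q_def using assms(2) scaler_nonneg[of "i - 1"] less
    by (intro lrp_mass_ball_compl_le) auto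
  also have "\<dots> \<le> ennreal (\<beta> * lrp_mass_const CARD('n) / (scaleN \<theta> c1 \<epsilon> - 1))"
    using \<open>q ^ CARD('n) \<le> 1 / (scaleN \<theta> c1 \<epsilon> - 1)\<close> assms(2) lrp_mass_const_pos[of "CARD('n)"]
    by (intro ennreal_leI) (auto dest: mult_left_mono[where c = "\<beta> * lrp_mass_const CARD('n)"])
  finally have mass:
    "lrp_mass \<beta> (ball 0 (scaler \<theta> c1 \<epsilon> (i - 1))) (- ball (0 :: real ^ 'n) (scaler \<theta> c1 \<epsilon> i))
      \<le> ennreal (\<beta> * lrp_mass_const CARD('n) / (scaleN \<theta> c1 \<epsilon> - 1))" .
  have "ball 0 (scaler \<theta> c1 \<epsilon> (i - 1)) \<inter> - ball (0 :: real ^ 'n) (scaler \<theta> c1 \<epsilon> i) = {}"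
    using less by auto
  note connects = lrp_edges_connects[OF assms(1) _ _ this mass]
  then show "H \<in> sets M" "measure M H \<le> \<beta> * lrp_mass_const CARD('n) / (scaleN \<theta> c1 \<epsilon> - 1)"
    using assms(2) two_le_scaleN lrp_mass_const_pos[of "CARD('n)"] unfolding H_def
    by (auto intro: borel_open borel_closed)
qed

lemma xi_sum_lower_tail:
  fixes E :: "'a \<Rightarrow> ((real ^ 'n) \<times> (real ^ 'n)) set" and t :: real
  assumes lrp: "lrp_edges \<beta> M E" and "0 \<le> \<beta>" "1 \<le> n"
  defines "p \<equiv> exp (- (\<beta> * lrp_mass_const CARD('n) * 16 ^ CARD('n)))"
  assumes "t \<le> n * p"
  shows "measure M {\<omega> \<in> space M. (\<Sum>i = 1..n. xi \<theta> c1 \<epsilon> (E \<omega>) i) \<le> t}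
    \<le> exp (- 2 * (n * p - t)\<^sup>2 / n) + n * (\<beta> * lrp_mass_const CARD('n) / (scaleN \<theta> c1 \<epsilon> - 1))"
proof -
  interpret prob_space M
    using lrp by (rule lrp_edges_prob_space)
  define F where
    "F i = space M - {\<omega> \<in> space M. connects (E \<omega>) (annulus i) (- ball 0 (scaler \<theta> c1 \<epsilon> i))}" for i
  define H where
    "H i = {\<omega> \<in> space M.
      connects (E \<omega>) (ball 0 (scaler \<theta> c1 \<epsilon> (i - 1))) (- ball 0 (scaler \<theta> c1 \<epsilon> i))}" for i
  define Few where "Few = {\<omega> \<in> space M. (\<Sum>i = 1..n. indicator (F i) \<omega>) \<le> t}"
  have F: "F i \<in> events" "p \<le> prob (F i)" if "i \<in> {1..n}" for i
    using that lrp_no_annulus_edge_prob[OF lrp \<open>0 \<le> \<beta>\<close>, of i] by (auto simp: F_def p_def)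
  have H: "H i \<in> events" "prob (H i) \<le> \<beta> * lrp_mass_const CARD('n) / (scaleN \<theta> c1 \<epsilon> - 1)"
    if "i \<in> {1..n}" for i
    using that lrp_inner_edge_prob[OF lrp \<open>0 \<le> \<beta>\<close>, of i] by (auto simp: H_def)
  have "indep_events F {1..n}"
    unfolding F_def
    by (intro indep_events_compl lrp_edges_indep_connects[OF lrp]
        disjoint_family_on_mono[OF _ annulus_edge_regions_disjoint])
      (use annulus_subset_ball in \<open>auto simp: annulus_def intro: borel_open borel_closed sets.Diff\<close>)
  then have "prob Few \<le> exp (- 2 * (n * p - t)\<^sup>2 / n)"
    unfolding Few_def using indep_events_count_le[of F "{1..n}" p t] F \<open>1 \<le> n\<close> \<open>t \<le> n * p\<close> by simp
  have "(\<lambda>\<omega>. \<Sum>i = 1..n. indicator (F i) \<omega> :: real) \<in> borel_measurable M"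
    using F by (intro borel_measurable_sum borel_measurable_indicator) auto
  then have "Few \<in> events"
    unfolding Few_def by measurable
  have "{\<omega> \<in> space M. (\<Sum>i = 1..n. xi \<theta> c1 \<epsilon> (E \<omega>) i) \<le> t} \<subseteq> Few \<union> (\<Union>i\<in>{1..n}. H i)"
  proof
    fix \<omega>
    assume \<omega>: "\<omega> \<in> {\<omega> \<in> space M. (\<Sum>i = 1..n. xi \<theta> c1 \<epsilon> (E \<omega>) i) \<le> t}"
    show "\<omega> \<in> Few \<union> (\<Union>i\<in>{1..n}. H i)"
    proof (cases "\<omega> \<in> (\<Union>i\<in>{1..n}. H i)")
      case False
      then have "xi \<theta> c1 \<epsilon> (E \<omega>) i = indicator (F i) \<omega>" if "i \<in> {1..n}" for i
        using \<omega> that xi_eq_annulus_edge[of i "E \<omega>"] by (auto simp: H_def F_def)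
      then show ?thesis
        using \<omega> by (simp add: Few_def)
    qed simp
  qed
  then have "measure M {\<omega> \<in> space M. (\<Sum>i = 1..n. xi \<theta> c1 \<epsilon> (E \<omega>) i) \<le> t}
      \<le> prob (Few \<union> (\<Union>i\<in>{1..n}. H i))"
    using \<open>Few \<in> events\<close> H by (intro finite_measure_mono) auto
  also have "\<dots> \<le> prob Few + prob (\<Union>i\<in>{1..n}. H i)"
    using \<open>Few \<in> events\<close> H by (intro measure_Un_le) auto
  also have "\<dots> \<le> prob Few + (\<Sum>i = 1..n. prob (H i))"
    using H by (intro add_left_mono finite_measure_subadditive_finite) auto
  also have "\<dots> \<le> exp (- 2 * (n * p - t)\<^sup>2 / n)
      + n * (\<beta> * lrp_mass_const CARD('n) / (scaleN \<theta> c1 \<epsilon> - 1))"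
    using \<open>prob Few \<le> exp (- 2 * (n * p - t)\<^sup>2 / n)\<close>
      sum_mono[of "{1..n}" "\<lambda>i. prob (H i)"
        "\<lambda>_. \<beta> * lrp_mass_const CARD('n) / (scaleN \<theta> c1 \<epsilon> - 1)"] H(2)
    by simp
  finally show ?thesis .
qed

end

lemma exp_tail_sum_le:
  fixes p K A :: real
  assumes "0 < p" "p \<le> 1" "4 \<le> K" "8 / (3 * p\<^sup>2) \<le> K" "3 * A \<le> K" "0 \<le> A"
  shows "exp (- (p\<^sup>2 * K / 2)) + A / 2 * K * exp (- K) \<le> exp (- (p\<^sup>2 * K / 8))"
proof -
  have "exp (- (3 * p\<^sup>2 * K / 8)) \<le> exp (- 1)"
    using assms(1,4) by (simp add: field_simps)
  also have "exp (- 1) \<le> (1 / 2 :: real)"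
    using exp_ge_add_one_self[of 1] by (simp add: exp_minus field_simps)
  finally have "exp (- (p\<^sup>2 * K / 2)) \<le> exp (- (p\<^sup>2 * K / 8)) / 2"
    using exp_add[of "- (p\<^sup>2 * K / 8)" "- (3 * p\<^sup>2 * K / 8)"] by (simp add: field_simps)
  moreover have "A * K * exp (- K) \<le> exp (- (p\<^sup>2 * K / 8))"
  proof -
    have "A * K \<le> (7 * K / 8)\<^sup>2 / 2"
      using assms(3,5) mult_right_mono[of A "K / 3" K] by (simp add: power2_eq_square field_simps)
    also have "\<dots> \<le> exp (7 * K / 8)"
      using exp_lower_Taylor_quadratic[of "7 * K / 8"] assms(3) by simp
    finally have "A * K * exp (- K) \<le> exp (7 * K / 8) * exp (- K)"
      by (simp add: mult_right_mono)
    also have "\<dots> \<le> exp (- (p\<^sup>2 * K / 8))"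
      using assms(1-3) power_le_one[of p 2] by (simp flip: exp_add)
    finally show ?thesis .
  qed
  ultimately show ?thesis
    by simp
qed

lemma xi_sum_lower_tail_exp:
  fixes E :: "'a \<Rightarrow> ((real ^ 'n) \<times> (real ^ 'n)) set"
  assumes lrp: "lrp_edges \<beta> M E" and "0 \<le> \<beta>" "0 < \<theta>" "\<theta> < 1" "0 < c1" "0 < \<epsilon>"
  defines "p \<equiv> exp (- (\<beta> * lrp_mass_const CARD('n) * 16 ^ CARD('n)))"
    and "B \<equiv> \<bar>(1 + 1 / \<theta>) * ln 4 - ln c1 / \<theta>\<bar>"
    and "K \<equiv> scaleK \<epsilon>"
  assumes "4 \<le> K" "8 / (3 * p\<^sup>2) \<le> K" "12 * \<beta> * lrp_mass_const CARD('n) * exp B \<le> K" "B + 17 \<le> K"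
  shows "measure M {\<omega> \<in> space M. (\<Sum>i = 1..nat \<lfloor>K\<rfloor>. xi \<theta> c1 \<epsilon> (E \<omega>) i) \<le> p * K / 4}
    \<le> exp (- (p\<^sup>2 * K / 8))"
proof -
  define n where "n = nat \<lfloor>K\<rfloor>"
  define N where "N = scaleN \<theta> c1 \<epsilon>"
  define A where "A = 4 * \<beta> * lrp_mass_const CARD('n) * exp B"
  have n: "1 \<le> n" "K - 1 \<le> n" "n \<le> K"
    using \<open>4 \<le> K\<close> by (auto simp: n_def le_nat_floor)
  have p: "0 < p" "p \<le> 1"
    using \<open>0 \<le> \<beta>\<close> lrp_mass_const_pos[of "CARD('n)"] by (auto simp: p_def)
  have "exp (K - B) \<le> N"
    using scaleN_ge_exp[of \<theta> c1 \<epsilon>] assms by (simp add: N_def)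
  moreover have "1 + (K - B) \<le> exp (K - B)"
    by (rule exp_ge_add_one_self)
  ultimately have "18 \<le> N"
    using \<open>B + 17 \<le> K\<close> by linarith
  then interpret lrp_scales \<theta> c1 \<epsilon>
    using assms by unfold_locales (auto simp: N_def)
  have "p * K / 2 \<le> n * p - p * K / 4"
    using n(2) p \<open>4 \<le> K\<close> mult_right_mono[of "K - 1" n p] by (simp add: field_simps)
  then have "2 * (p * K / 2)\<^sup>2 / K \<le> 2 * (n * p - p * K / 4)\<^sup>2 / n"
    using n p \<open>4 \<le> K\<close> by (intro frac_le mult_left_mono power_mono) auto
  moreover have "2 * (p * K / 2)\<^sup>2 / K = p\<^sup>2 * K / 2"
    using \<open>4 \<le> K\<close> by (simp add: power2_eq_square)
  ultimately have Hoeffding_term: "exp (- 2 * (n * p - p * K / 4)\<^sup>2 / n) \<le> exp (- (p\<^sup>2 * K / 2))"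
    by simp
  have "1 / (N - 1) \<le> 2 * exp (B - K)"
  proof -
    have "1 / (N - 1) \<le> 2 / N"
      using \<open>18 \<le> N\<close> by (simp add: field_simps)
    also have "\<dots> \<le> 2 / exp (K - B)"
      using \<open>exp (K - B) \<le> N\<close> \<open>18 \<le> N\<close> by (intro divide_left_mono) auto
    finally show ?thesis
      by (simp add: exp_diff field_simps)
  qed
  have union_term: "n * (\<beta> * lrp_mass_const CARD('n) / (N - 1)) \<le> A / 2 * K * exp (- K)"
  proof -
    have "n * (\<beta> * lrp_mass_const CARD('n) / (N - 1))
        = \<beta> * lrp_mass_const CARD('n) * (n * (1 / (N - 1)))"
      by simp
    also have "\<dots> \<le> \<beta> * lrp_mass_const CARD('n) * (K * (2 * exp (B - K)))"
      using \<open>1 / (N - 1) \<le> 2 * exp (B - K)\<close> n(3) \<open>0 \<le> \<beta>\<close> \<open>18 \<le> N\<close> lrp_mass_const_pos[of "CARD('n)"]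
      by (intro mult_left_mono mult_mono) auto
    also have "\<dots> = A / 2 * K * exp (- K)"
      by (simp add: A_def exp_diff exp_minus field_simps)
    finally show ?thesis .
  qed
  have "measure M {\<omega> \<in> space M. (\<Sum>i = 1..n. xi \<theta> c1 \<epsilon> (E \<omega>) i) \<le> p * K / 4}
      \<le> exp (- 2 * (n * p - p * K / 4)\<^sup>2 / n) + n * (\<beta> * lrp_mass_const CARD('n) / (N - 1))"
    unfolding p_def N_def
    by (rule xi_sum_lower_tail[OF lrp \<open>0 \<le> \<beta>\<close> n(1)])
      (use n(2) p \<open>4 \<le> K\<close> in \<open>simp add: p_def[symmetric]\<close>)
  also have "\<dots> \<le> exp (- (p\<^sup>2 * K / 2)) + A / 2 * K * exp (- K)"
    using Hoeffding_term union_term by (rule add_mono)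
  also have "\<dots> \<le> exp (- (p\<^sup>2 * K / 8))"
    using assms p \<open>0 \<le> \<beta>\<close> lrp_mass_const_pos[of "CARD('n)"]
    by (intro exp_tail_sum_le) (auto simp: A_def)
  finally show ?thesis
    by (simp add: n_def)
qed

theorem proposition3p3:
  fixes \<beta> \<theta> c1 :: real
  assumes "\<beta> > 0" and "0 < \<theta>" and "\<theta> < 1" and "c1 > 0"
  shows "\<exists>\<kappa>. 0 < \<kappa> \<and> \<kappa> < 1 \<and>
    (\<exists>\<epsilon>0 > 0. \<forall>\<epsilon>. 0 < \<epsilon> \<and> \<epsilon> < \<epsilon>0 \<longrightarrow>
       (\<forall>(M :: 'a measure) (E :: 'a \<Rightarrow> ((real ^ 'n) \<times> (real ^ 'n)) set).
          lrp_edges \<beta> M E \<longrightarrow>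
          measure M {\<omega> \<in> space M.
             (\<Sum>i = 1..nat \<lfloor>scaleK \<epsilon>\<rfloor>. xi \<theta> c1 \<epsilon> (E \<omega>) i) \<le> (1 - \<kappa>) * scaleK \<epsilon> / 2}
          \<le> exp (- ((1 - \<kappa>)\<^sup>2 * scaleK \<epsilon> / 2))))"
proof -
  define p where "p = exp (- (\<beta> * lrp_mass_const CARD('n) * 16 ^ CARD('n)))"
  define B where "B = \<bar>(1 + 1 / \<theta>) * ln 4 - ln c1 / \<theta>\<bar>"
  define K0 where "K0 = Max {4, 8 / (3 * p\<^sup>2), 12 * \<beta> * lrp_mass_const CARD('n) * exp B, B + 17}"
  have "0 < p" "p \<le> 1"
    using assms lrp_mass_const_pos[of "CARD('n)"] by (auto simp: p_def)
  have "measure M {\<omega> \<in> space M. (\<Sum>i = 1..nat \<lfloor>scaleK \<epsilon>\<rfloor>. xi \<theta> c1 \<epsilon> (E \<omega>) i) \<le> p * scaleK \<epsilon> / 4}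
      \<le> exp (- (p\<^sup>2 * scaleK \<epsilon> / 8))"
    if "0 < \<epsilon>" "\<epsilon> < exp (- K0\<^sup>2)" "lrp_edges \<beta> M E"
    for \<epsilon> and M :: "'a measure" and E :: "'a \<Rightarrow> ((real ^ 'n) \<times> (real ^ 'n)) set"
  proof -
    have "K0 < scaleK \<epsilon>"
      using that by (intro scaleK_gt) (auto simp: K0_def)
    then show ?thesis
      unfolding p_def using that assms
      by (intro xi_sum_lower_tail_exp) (auto simp: K0_def B_def p_def)
  qed
  then show ?thesis
    using \<open>0 < p\<close> \<open>p \<le> 1\<close>
    by (intro exI[of _ "1 - p / 2"] conjI exI[of _ "exp (- K0\<^sup>2)"])
      (auto simp: power_divide mult.commute)
qed

end
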